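(* Let $\ell\ge 1$, $N=2^\ell$, and let $D$ be an $N\times N$ binary dyadic matrix. If $S=\mathrm{supp}(\sigma(D))\subseteq \mathbb{F}_2^\ell$ is a linear subspace of $\mathbb{F}_2^\ell$ or a coset ${\mathbf a}+U$ of a linear subspace $U$ of $\mathbb{F}_2^\ell$, then $\mathrm{rank}_{\mathbb{F}_2}(D)=N/|S|$.
   Context: Rows and columns of $N\times N$ binary matrices ($N=2^\ell$) are indexed by $\mathbb{F}_2^\ell$ via the bijection ${\mathbf x}=(x_1,\dots,x_\ell)\leftrightarrow 1+\sum_{i=1}^\ell x_i2^{i-1}\in\{1,\dots,N\}$. A matrix $D\in\mathbb{F}_2^{N\times N}$ is dyadic if $D_{{\mathbf x},{\mathbf y}}=D_{{\bf 0},{\mathbf x}+{\mathbf y}}$ for all ${\mathbf x},{\mathbf y}\in\mathbb{F}_2^\ell$. The signature $\sigma(D)\in\mathbb{F}_2^N$ is the row of $D$ indexed by ${\bf 0}$; its support $\mathrm{supp}(\sigma(D))$ (set of positions with nonzero entries) is viewed as a subset of $\mathbb{F}_2^\ell$ via the bijection. *)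

theory Defs
  imports "HOL-Library.Z2" "Jordan_Normal_Form.DL_Rank"
begin

text \<open>Encoding: a vector x = (x_1,...,x_l) in F_2^l is represented by the natural
number k = sum_i x_i 2^(i-1) < 2^l (the paper's index minus 1, since matrices here are
0-indexed).\<close>

definition f2_add :: "nat \<Rightarrow> nat \<Rightarrow> nat" where
  "f2_add x y = Bit_Operations.xor x y"

definition f2_smult :: "bit \<Rightarrow> nat \<Rightarrow> nat" where
  "f2_smult c x = (if c = 0 then 0 else x)"

definition f2_subspace :: "nat \<Rightarrow> nat set \<Rightarrow> bool" where
  "f2_subspace l U \<longleftrightarrow> U \<subseteq> {..<2^l} \<and> 0 \<in> U \<and>
     (\<forall>x\<in>U. \<forall>y\<in>U. f2_add x y \<in> U) \<and> (\<forall>c. \<forall>x\<in>U. f2_smult c x \<in> U)"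

definition f2_coset :: "nat \<Rightarrow> nat set \<Rightarrow> bool" where
  "f2_coset l S \<longleftrightarrow> (\<exists>a U. a < 2^l \<and> f2_subspace l U \<and> S = f2_add a ` U)"

definition dyadic :: "nat \<Rightarrow> bit mat \<Rightarrow> bool" where
  "dyadic l D \<longleftrightarrow> D \<in> carrier_mat (2^l) (2^l) \<and>
     (\<forall>x<2^l. \<forall>y<2^l. D $$ (x, y) = D $$ (0, f2_add x y))"

definition signature :: "bit mat \<Rightarrow> bit vec" where
  "signature D = row D 0"

definition supp :: "bit vec \<Rightarrow> nat set" where
  "supp v = {i. i < dim_vec v \<and> v $ i \<noteq> 0}"

definition rank_F2 :: "bit mat \<Rightarrow> nat" where
  "rank_F2 D = vec_space.rank (dim_row D) D"

end

theory Submission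
  imports Defs
begin

text \<open>Column y of a dyadic matrix is the indicator vector of the translate S + y of the
support S of its signature. If S is an affine subspace, two translates are equal or disjoint,
so they partition F_2^l into N/|S| blocks; the distinct columns then have disjoint nonempty
supports, hence are linearly independent, and the rank is the number N/|S| of translates.\<close>

lemma xor_less_power2:
  fixes x y :: nat
  assumes "x < 2^l" and "y < 2^l"
  shows "xor x y < 2^l"
  using assms by (metis take_bit_nat_eq_self_iff take_bit_xor)

lemma xor_left_self: "xor a (xor a b) = (b :: 'a::semiring_bit_operations)"
  by (simp flip: xor.assoc)

text \<open>Over F_2 the affine combinations of three points are the sums a + b + c, so the sets
below are exactly the affine subspaces.\<close>

definition f2_affine :: "nat set \<Rightarrow> bool" where
  "f2_affine S \<longleftrightarrow> S \<noteq> {} \<and> (\<forall>a\<in>S. \<forall>b\<in>S. \<forall>c\<in>S. xor (xor a b) c \<in> S)"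

lemma f2_subspace_affine:
  assumes "f2_subspace l U"
  shows "f2_affine U"
  using assms unfolding f2_subspace_def f2_affine_def f2_add_def by blast

lemma f2_coset_affine:
  assumes "f2_coset l S"
  shows "f2_affine S"
proof -
  obtain a U where U: "f2_affine U" and S: "S = (\<lambda>u. xor a u) ` U"
    using assms f2_subspace_affine unfolding f2_coset_def f2_add_def by blast
  have "xor (xor (xor a u) (xor a v)) (xor a w) = xor a (xor (xor u v) w)" for u v w :: nat
    by (simp add: ac_simps xor_left_self)
  then show ?thesis
    using U unfolding f2_affine_def S by auto
qed

definition f2_translate :: "nat set \<Rightarrow> nat \<Rightarrow> nat set" where
  "f2_translate S y = (\<lambda>s. xor s y) ` S"

lemma mem_f2_translate_iff: "x \<in> f2_translate S y \<longleftrightarrow> xor x y \<in> S"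
  unfolding f2_translate_def by (force simp: xor.assoc)

lemma card_f2_translate: "card (f2_translate S y) = card S"
  unfolding f2_translate_def
  by (rule card_image, rule inj_onI) (metis xor.commute xor_left_self)

lemma f2_translates_eq_if_meet:
  assumes "f2_affine S" and "x \<in> f2_translate S y" and "x \<in> f2_translate S y'"
  shows "f2_translate S y = f2_translate S y'"
proof -
  have sub: "f2_translate S y \<subseteq> f2_translate S y'"
    if "x \<in> f2_translate S y" and "x \<in> f2_translate S y'" for y y'
  proof
    fix z assume "z \<in> f2_translate S y"
    then have "xor (xor (xor z y) (xor x y)) (xor x y') \<in> S"
      using assms(1) that unfolding f2_affine_def mem_f2_translate_iff by blast
    moreover have "xor (xor (xor z y) (xor x y)) (xor x y') = xor z y'"
      by (simp add: ac_simps xor_left_self)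
    ultimately show "z \<in> f2_translate S y'"
      by (simp add: mem_f2_translate_iff)
  qed
  show ?thesis
    using sub assms(2,3) by blast
qed

lemma f2_translates_partition:
  assumes "f2_affine S" and "S \<subseteq> {..<2^l}"
  shows "partition_on {..<2^l} (f2_translate S ` {..<2^l})"
proof (rule partition_onI)
  obtain s where s: "s \<in> S" using assms(1) unfolding f2_affine_def by blast
  show "\<Union> (f2_translate S ` {..<2^l}) = {..<2^l}"
  proof
    show "\<Union> (f2_translate S ` {..<2^l}) \<subseteq> {..<2^l}"
      using assms(2) xor_less_power2 by (fastforce simp: f2_translate_def)
    show "{..<2^l} \<subseteq> \<Union> (f2_translate S ` {..<2^l})"
    proof
      fix x :: nat assume "x \<in> {..<2^l}"
      moreover have "x \<in> f2_translate S (xor x s)"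
        using s by (simp add: mem_f2_translate_iff flip: xor.assoc)
      ultimately show "x \<in> \<Union> (f2_translate S ` {..<2^l})"
        using s assms(2) xor_less_power2 by blast
    qed
  qed
  show "disjnt T T'"
    if "T \<in> f2_translate S ` {..<2^l}" and "T' \<in> f2_translate S ` {..<2^l}" and "T \<noteq> T'"
    for T T'
    using that f2_translates_eq_if_meet[OF assms(1)] unfolding disjnt_def by blast
  show "{} \<notin> f2_translate S ` {..<2^l}"
    using s by (auto simp: f2_translate_def)
qed

lemma card_f2_translates:
  assumes "f2_affine S" and "S \<subseteq> {..<2^l}"
  shows "card (f2_translate S ` {..<2^l}) = 2^l div card S"
proof -
  have part: "partition_on {..<2^l} (f2_translate S ` {..<2^l})"
    using f2_translates_partition[OF assms] .
  have "card S * card (f2_translate S ` {..<2^l}) = card (\<Union> (f2_translate S ` {..<2^l}))"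
    by (rule card_partition)
      (use part in \<open>auto simp: card_f2_translate partition_on_def dest: disjointD\<close>)
  also have "\<dots> = 2^l"
    using part by (simp add: partition_on_def)
  finally have "card S * card (f2_translate S ` {..<2^l}) = 2^l" .
  moreover have "card S > 0"
    using assms by (metis card_gt_0_iff f2_affine_def finite_lessThan finite_subset)
  ultimately show ?thesis
    by (metis nonzero_mult_div_cancel_left less_not_refl)
qed

definition indicator_vec :: "nat \<Rightarrow> nat set \<Rightarrow> 'a::zero_neq_one vec" where
  "indicator_vec n T = vec n (\<lambda>i. of_bool (i \<in> T))"

lemma inj_on_indicator_vec: "inj_on (indicator_vec n :: _ \<Rightarrow> 'a::zero_neq_one vec) (Pow {..<n})"
proof (rule inj_onI)
  fix T T' assume "T \<in> Pow {..<n}" "T' \<in> Pow {..<n}"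
    and eq: "(indicator_vec n T :: 'a vec) = indicator_vec n T'"
  have "i \<in> T \<longleftrightarrow> i \<in> T'" if "i < n" for i
    using arg_cong[OF eq, of "\<lambda>v. v $ i"] that by (simp add: indicator_vec_def of_bool_eq_iff)
  then show "T = T'"
    using \<open>T \<in> Pow {..<n}\<close> \<open>T' \<in> Pow {..<n}\<close> by blast
qed

lemma (in vec_space) rank_eq_card_cols:
  assumes "A \<in> carrier_mat n nc" and "lin_indpt (set (cols A))"
  shows "rank A = card (set (cols A))"
  using assms by (intro rank_card_indpt) (auto simp: maximal_def)

lemma (in vec_space) lin_indpt_if_private_coordinates:
  assumes "W \<subseteq> carrier_vec n"
    and "\<And>w. w \<in> W \<Longrightarrow> \<exists>i<n. w $ i \<noteq> 0 \<and> (\<forall>w'\<in>W - {w}. w' $ i = 0)"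
  shows "lin_indpt W"
proof
  assume "lin_dep W"
  then obtain A a w where A: "finite A" "A \<subseteq> W" and lc: "lincomb a A = 0\<^sub>v n"
    and w: "w \<in> A" "a w \<noteq> 0"
    unfolding lin_dep_def by auto
  obtain i where i: "i < n" "w $ i \<noteq> 0" and others: "\<forall>w'\<in>W - {w}. w' $ i = 0"
    using assms(2) w(1) A(2) by blast
  have "0 = lincomb a A $ i"
    using lc i(1) by simp
  also have "\<dots> = (\<Sum>w'\<in>A. a w' * w' $ i)"
    using lincomb_index[OF i(1)] A(2) assms(1) by blast
  also have "\<dots> = a w * w $ i + (\<Sum>w'\<in>A - {w}. a w' * w' $ i)"
    using sum.remove[OF A(1) w(1)] .
  also have "\<dots> = a w * w $ i"
    using others A(2) by (simp add: subset_iff)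
  finally show False
    using w(2) i(2) by simp
qed

lemma (in vec_space) lin_indpt_indicator_vecs:
  assumes "\<Union>\<T> \<subseteq> {..<n}" and "disjoint \<T>" and "{} \<notin> \<T>"
  shows "lin_indpt (indicator_vec n ` \<T>)"
proof (rule lin_indpt_if_private_coordinates)
  show "indicator_vec n ` \<T> \<subseteq> carrier_vec n"
    by (auto simp: indicator_vec_def)
  fix w assume "w \<in> indicator_vec n ` \<T>"
  then obtain T where T: "T \<in> \<T>" and w: "w = indicator_vec n T"
    by blast
  then obtain i where i: "i \<in> T"
    using assms(3) by (metis ex_in_conv)
  have "i < n"
    using assms(1) T i by blast
  have "w' $ i = 0" if "w' \<in> indicator_vec n ` \<T> - {w}" for w'
  proof -
    obtain T' where "T' \<in> \<T>" "w' = indicator_vec n T'" "T' \<noteq> T"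
      using \<open>w' \<in> indicator_vec n ` \<T> - {w}\<close> w by blast
    then have "i \<notin> T'"
      using assms(2) T i by (auto dest: disjointD)
    then show ?thesis
      using \<open>w' = indicator_vec n T'\<close> \<open>i < n\<close> by (simp add: indicator_vec_def)
  qed
  moreover have "w $ i \<noteq> 0"
    using \<open>i < n\<close> i w by (simp add: indicator_vec_def)
  ultimately show "\<exists>i<n. w $ i \<noteq> 0 \<and> (\<forall>w'\<in>indicator_vec n ` \<T> - {w}. w' $ i = 0)"
    using \<open>i < n\<close> by blast
qed

lemma supp_signature_dyadic:
  assumes "dyadic l D"
  shows "supp (signature D) = {x. x < 2^l \<and> D $$ (0, x) \<noteq> 0}"
  using assms unfolding dyadic_def supp_def signature_def by auto

lemma col_dyadic:
  assumes "dyadic l D" and "y < 2^l"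
  shows "col D y = indicator_vec (2^l) (f2_translate (supp (signature D)) y)"
proof (rule eq_vecI)
  have D: "D \<in> carrier_mat (2^l) (2^l)"
    using assms(1) unfolding dyadic_def by blast
  then show "dim_vec (col D y) = dim_vec (indicator_vec (2^l) (f2_translate (supp (signature D)) y))"
    by (simp add: indicator_vec_def)
  fix x assume "x < dim_vec (indicator_vec (2^l) (f2_translate (supp (signature D)) y) :: bit vec)"
  then have x: "x < 2^l"
    by (simp add: indicator_vec_def)
  have "D $$ (x, y) = D $$ (0, xor x y)"
    using assms x unfolding dyadic_def f2_add_def by blast
  then show "col D y $ x = indicator_vec (2^l) (f2_translate (supp (signature D)) y) $ x"
    using D x assms(2) xor_less_power2[OF x assms(2)]
    by (auto simp: indicator_vec_def mem_f2_translate_iff supp_signature_dyadic[OF assms(1)]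
        bit_not_zero_iff)
qed

theorem mainTheorem1:
  fixes l :: nat and D :: "bit mat"
  assumes "l \<ge> 1"
    and "dyadic l D"
    and "f2_subspace l (supp (signature D)) \<or> f2_coset l (supp (signature D))"
  shows "rank_F2 D = 2^l div card (supp (signature D))"
proof -
  interpret vec_space "TYPE(bit)" "2^l" .
  let ?S = "supp (signature D)"
  let ?\<T> = "f2_translate ?S ` {..<2^l}"
  have D: "D \<in> carrier_mat (2^l) (2^l)"
    using assms(2) unfolding dyadic_def by blast
  have S: "f2_affine ?S" "?S \<subseteq> {..<2^l}"
    using assms(3) f2_subspace_affine f2_coset_affine supp_signature_dyadic[OF assms(2)] by auto
  have part: "partition_on {..<2^l} ?\<T>"
    using f2_translates_partition[OF S] .
  have cols: "set (cols D) = indicator_vec (2^l) ` ?\<T>"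
    using D col_dyadic[OF assms(2)] by (auto simp: cols_def image_image)
  have "lin_indpt (set (cols D))"
    unfolding cols using part by (intro lin_indpt_indicator_vecs) (auto simp: partition_on_def)
  then have "rank_F2 D = card (set (cols D))"
    using D rank_eq_card_cols by (simp add: rank_F2_def)
  also have "\<dots> = card ?\<T>"
    unfolding cols using part
    by (intro card_image inj_on_subset[OF inj_on_indicator_vec]) (auto simp: partition_on_def)
  also have "\<dots> = 2^l div card ?S"
    using card_f2_translates[OF S] .
  finally show ?thesis .
qed

end
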